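(* Let $\mathfrak M\models S_{\overline\alpha}^\forall$ and $\mathfrak A,\mathfrak B\in K_{\overline\alpha}$ with $\mathfrak B\cap\mathfrak M=\mathfrak A$ (so $\mathfrak A$ is a common substructure of $\mathfrak M$ and $\mathfrak B$), and let $\mathfrak N=\mathfrak M\oplus_{\mathfrak A}\mathfrak B$. (1) If $\mathfrak A\le\mathfrak B$ or $\mathfrak A\le\mathfrak M$, then $\mathfrak N\models S_{\overline\alpha}^\forall$. (2) If $\mathfrak A\le\mathfrak B$, then $\mathfrak N$ preserves closures for $\mathfrak M$. (3) If $\mathfrak A\le\mathfrak M$, then $\mathfrak B\le\mathfrak N$. (4) If ($\mathfrak A\le\mathfrak B$ or $\mathfrak A\le\mathfrak M$) and $\mathfrak M$ has finite closures, then $\mathfrak N$ has finite closures.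
   Context: Fix a finite relational language $L$ in which every relation symbol has arity at least $2$. $K_L$ is the class of all finite $L$-structures (including the empty one) in which every relation symbol is interpreted symmetrically and irreflexively. Fix $\overline\alpha:L\to(0,1]$, writing $\overline\alpha_E=\overline\alpha(E)$, such that it is not the case that all symbols of $L$ are binary and $\overline\alpha_E=1$ for all $E$. For $\mathfrak A\in K_L$ let $N_E(\mathfrak A)$ be the number of subsets of $A$ on which $E$ holds and $\delta(\mathfrak A)=|A|-\sum_{E}\overline\alpha_E N_E(\mathfrak A)$; subsets of a structure are identified with induced substructures. $K_{\overline\alpha}=\{\mathfrak A\in K_L:\delta(\mathfrak A')\ge0\text{ for all substructures }\mathfrak A'\subseteq\mathfrak A\}$. For $\mathfrak A\subseteq\mathfrak B$ in $K_L$, $\mathfrak A\le\mathfrak B$ means $\delta(\mathfrak A)\le\delta(\mathfrak A')$ for all $\mathfrak A\subseteq\mathfrak A'\subseteq\mathfrak B$; for finite $\mathfrak A\subseteq\mathfrak X$ with $\mathfrak X$ arbitrary, $\mathfrak A\le\mathfrak X$ means $\mathfrak A\le\mathfrak C$ for all finite $\mathfrak A\subseteq\mathfrak C\subseteq\mathfrak X$. $(\mathfrak A,\mathfrak B)$ is a minimal pair if $\mathfrak A\subseteq\mathfrak B$, $\mathfrak A\le\mathfrak C$ for all $\mathfrak A\subseteq\mathfrak C\subsetneq\mathfrak B$, but $\mathfrak A\not\le\mathfrak B$. A subset $X$ of a structure $\mathfrak Z$ is closed in $\mathfrak Z$ if for every finite $A\subseteq X$ and every minimal pair $(A,B)$ with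 $B\subseteq Z$, $B\subseteq X$. $S_{\overline\alpha}$ is the theory whose models are those structures in which every finite substructure lies in $K_{\overline\alpha}$ and, for all $\mathfrak A\le\mathfrak B$ in $K_{\overline\alpha}$, every embedding of $\mathfrak A$ extends to an embedding of $\mathfrak B$; $S_{\overline\alpha}^\forall$ is the set of universal sentences of $S_{\overline\alpha}$ (its models are the $L$-structures all of whose finite substructures lie in $K_{\overline\alpha}$). The free join $\mathfrak M\oplus_{\mathfrak A}\mathfrak B$ is the structure with universe $M\cup B$ whose relations are exactly $E^{\mathfrak M}\cup E^{\mathfrak B}$ for each $E\in L$. For $\mathfrak M\subseteq\mathfrak N$, $\mathfrak N$ preserves closures for $\mathfrak M$ if every $X\subseteq M$ closed in $\mathfrak M$ is closed in $\mathfrak N$. A structure has finite closures if each of its finite subsets is contained in a finite subset strong in the structure. *)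

theory Defs
  imports Complex_Main
begin

text \<open>
  The language is a finite set L of relation symbols (type 'l) with
  arities ar :: 'l => nat and weights alpha :: 'l => real.  A symmetric irreflexive
  relation of arity k is identified with the set of k-element subsets on which it holds.
  An L-structure with universe U is given by R :: 'l => 'a set set, where R E is the set
  of (ar E)-element subsets of U on which E holds.  Subsets of a structure are identified
  with induced substructures.
\<close>

definition is_struct :: "'l set \<Rightarrow> ('l \<Rightarrow> nat) \<Rightarrow> 'a set \<Rightarrow> ('l \<Rightarrow> 'a set set) \<Rightarrow> bool" where
  "is_struct L ar U R \<longleftrightarrow> (\<forall>E. \<forall>s\<in>R E. E \<in> L \<and> s \<subseteq> U \<and> card s = ar E)"

definition induced :: "('l \<Rightarrow> 'a set set) \<Rightarrow> 'a set \<Rightarrow> ('l \<Rightarrow> 'a set set)" where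
  "induced R X = (\<lambda>E. {s \<in> R E. s \<subseteq> X})"

definition is_substr :: "'a set \<Rightarrow> ('l \<Rightarrow> 'a set set) \<Rightarrow> 'a set \<Rightarrow> ('l \<Rightarrow> 'a set set) \<Rightarrow> bool" where
  "is_substr UA RA U R \<longleftrightarrow> UA \<subseteq> U \<and> RA = induced R UA"

definition delta :: "'l set \<Rightarrow> ('l \<Rightarrow> real) \<Rightarrow> ('l \<Rightarrow> 'a set set) \<Rightarrow> 'a set \<Rightarrow> real" where
  "delta L alpha R A = real (card A) - (\<Sum>E\<in>L. alpha E * real (card {s \<in> R E. s \<subseteq> A}))"

definition in_K :: "'l set \<Rightarrow> ('l \<Rightarrow> nat) \<Rightarrow> ('l \<Rightarrow> real) \<Rightarrow> 'a set \<Rightarrow> ('l \<Rightarrow> 'a set set) \<Rightarrow> bool" where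
  "in_K L ar alpha U R \<longleftrightarrow> is_struct L ar U R \<and> finite U \<and>
     (\<forall>X. X \<subseteq> U \<longrightarrow> 0 \<le> delta L alpha (induced R X) X)"

definition models_Sforall :: "'l set \<Rightarrow> ('l \<Rightarrow> nat) \<Rightarrow> ('l \<Rightarrow> real) \<Rightarrow> 'a set \<Rightarrow> ('l \<Rightarrow> 'a set set) \<Rightarrow> bool" where
  "models_Sforall L ar alpha U R \<longleftrightarrow> is_struct L ar U R \<and>
     (\<forall>X. X \<subseteq> U \<and> finite X \<longrightarrow> in_K L ar alpha X (induced R X))"

definition strong :: "'l set \<Rightarrow> ('l \<Rightarrow> real) \<Rightarrow> ('l \<Rightarrow> 'a set set) \<Rightarrow> 'a set \<Rightarrow> 'a set \<Rightarrow> bool" where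
  "strong L alpha R A X \<longleftrightarrow> A \<subseteq> X \<and> finite A \<and>
     (\<forall>C. A \<subseteq> C \<and> C \<subseteq> X \<and> finite C \<longrightarrow> delta L alpha R A \<le> delta L alpha R C)"

definition min_pair :: "'l set \<Rightarrow> ('l \<Rightarrow> real) \<Rightarrow> ('l \<Rightarrow> 'a set set) \<Rightarrow> 'a set \<Rightarrow> 'a set \<Rightarrow> bool" where
  "min_pair L alpha R A B \<longleftrightarrow> A \<subseteq> B \<and> finite B \<and>
     (\<forall>C. A \<subseteq> C \<and> C \<subset> B \<longrightarrow> strong L alpha R A C) \<and> \<not> strong L alpha R A B"

definition closed_in :: "'l set \<Rightarrow> ('l \<Rightarrow> real) \<Rightarrow> 'a set \<Rightarrow> ('l \<Rightarrow> 'a set set) \<Rightarrow> 'a set \<Rightarrow> bool" where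
  "closed_in L alpha U R X \<longleftrightarrow> X \<subseteq> U \<and>
     (\<forall>A B. A \<subseteq> X \<and> finite A \<and> B \<subseteq> U \<and> min_pair L alpha R A B \<longrightarrow> B \<subseteq> X)"

definition preserves_closures :: "'l set \<Rightarrow> ('l \<Rightarrow> real) \<Rightarrow> 'a set \<Rightarrow> ('l \<Rightarrow> 'a set set)
    \<Rightarrow> 'a set \<Rightarrow> ('l \<Rightarrow> 'a set set) \<Rightarrow> bool" where
  "preserves_closures L alpha UM RM UNN RNN \<longleftrightarrow>
     (\<forall>X. X \<subseteq> UM \<and> closed_in L alpha UM RM X \<longrightarrow> closed_in L alpha UNN RNN X)"

definition finite_closures :: "'l set \<Rightarrow> ('l \<Rightarrow> real) \<Rightarrow> 'a set \<Rightarrow> ('l \<Rightarrow> 'a set set) \<Rightarrow> bool" where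
  "finite_closures L alpha U R \<longleftrightarrow>
     (\<forall>F. F \<subseteq> U \<and> finite F \<longrightarrow> (\<exists>G. F \<subseteq> G \<and> G \<subseteq> U \<and> finite G \<and> strong L alpha R G U))"

text \<open>Relations of the free join M \<oplus>_A B (universe UM \<union> UB).\<close>
definition join_rel :: "('l \<Rightarrow> 'a set set) \<Rightarrow> ('l \<Rightarrow> 'a set set) \<Rightarrow> ('l \<Rightarrow> 'a set set)" where
  "join_rel RM RB = (\<lambda>E. RM E \<union> RB E)"

end

theory Submission
  imports Defs
begin

text \<open>
  Everything rests on two facts about the predimension. It is submodular, so a strong set
  \<open>A \<le> U\<close> satisfies \<open>\<delta>(Z \<inter> A) \<le> \<delta>(Z)\<close> for all finite \<open>Z \<subseteq> U\<close>. And it is modular on the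
  free join: no relation of \<open>N = M \<oplus>\<^sub>A B\<close> meets both \<open>M - A\<close> and \<open>B - A\<close>, so
  \<open>\<delta>\<^sub>N(Y) = \<delta>\<^sub>M(Y \<inter> M) + \<delta>\<^sub>B(Y \<inter> B) - \<delta>(Y \<inter> A)\<close>. If \<open>A \<le> B\<close> the last two terms
  give \<open>\<delta>\<^sub>N(Y) \<ge> \<delta>\<^sub>M(Y \<inter> M)\<close>, which yields nonnegativity and shows that a minimal pair over
  a subset of \<open>M\<close> cannot leave \<open>M\<close>; symmetrically if \<open>A \<le> M\<close>. Finally, for \<open>A \<subseteq> G \<le> M\<close>
  the same identity shows \<open>G \<union> B \<le> N\<close>, giving both \<open>B \<le> N\<close> and finite closures.
\<close>

lemma finite_edges_within: "finite Y \<Longrightarrow> finite {s \<in> R E. s \<subseteq> Y}"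
  by (rule finite_subset[of _ "Pow Y"]) auto

lemma induced_induced: "Y \<subseteq> X \<Longrightarrow> induced (induced R X) Y = induced R Y"
  unfolding induced_def by auto

lemma delta_induced:
  assumes "Y \<subseteq> X"
  shows "delta L alpha (induced R X) Y = delta L alpha R Y"
proof -
  have "{s \<in> induced R X E. s \<subseteq> Y} = {s \<in> R E. s \<subseteq> Y}" for E
    using assms unfolding induced_def by auto
  then show ?thesis unfolding delta_def by simp
qed

lemma strong_induced:
  assumes "X \<subseteq> Y"
  shows "strong L alpha (induced R Y) A X \<longleftrightarrow> strong L alpha R A X"
proof -
  have "C \<subseteq> X \<Longrightarrow> delta L alpha (induced R Y) C = delta L alpha R C" for C
    by (rule delta_induced) (use assms in blast)
  then show ?thesis
    unfolding strong_def by (simp cong: conj_cong)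
qed

lemma min_pair_induced:
  assumes "B \<subseteq> Y"
  shows "min_pair L alpha (induced R Y) A B \<longleftrightarrow> min_pair L alpha R A B"
proof -
  have "C \<subset> B \<Longrightarrow> strong L alpha (induced R Y) A C \<longleftrightarrow> strong L alpha R A C" for C
    by (rule strong_induced) (use assms in blast)
  then show ?thesis
    unfolding min_pair_def strong_induced[OF assms] by (simp cong: conj_cong)
qed

lemma is_struct_join_rel:
  "is_struct L ar U R \<Longrightarrow> is_struct L ar U' R' \<Longrightarrow> is_struct L ar (U \<union> U') (join_rel R R')"
  unfolding is_struct_def join_rel_def by blast

lemma in_K_induced_iff:
  assumes "is_struct L ar U R" "X \<subseteq> U" "finite X"
  shows "in_K L ar alpha X (induced R X) \<longleftrightarrow> (\<forall>Z\<subseteq>X. 0 \<le> delta L alpha R Z)"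
proof -
  have "is_struct L ar X (induced R X)"
    using assms(1) unfolding is_struct_def induced_def by auto
  moreover have "Z \<subseteq> X \<Longrightarrow> delta L alpha (induced (induced R X) Z) Z = delta L alpha R Z" for Z
    by (simp add: induced_induced delta_induced)
  ultimately show ?thesis
    unfolding in_K_def using assms(3) by simp
qed

lemma models_Sforall_iff_delta_nonneg:
  "models_Sforall L ar alpha U R \<longleftrightarrow>
     is_struct L ar U R \<and> (\<forall>Z. Z \<subseteq> U \<and> finite Z \<longrightarrow> 0 \<le> delta L alpha R Z)"
proof -
  have "(\<forall>X. X \<subseteq> U \<and> finite X \<longrightarrow> (\<forall>Z\<subseteq>X. 0 \<le> delta L alpha R Z))
      \<longleftrightarrow> (\<forall>Z. Z \<subseteq> U \<and> finite Z \<longrightarrow> 0 \<le> delta L alpha R Z)"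
  proof (intro iffI allI impI)
    fix Z assume "\<forall>X. X \<subseteq> U \<and> finite X \<longrightarrow> (\<forall>Z\<subseteq>X. 0 \<le> delta L alpha R Z)"
      and "Z \<subseteq> U \<and> finite Z"
    then show "0 \<le> delta L alpha R Z" by blast
  next
    fix X Z assume "\<forall>Z. Z \<subseteq> U \<and> finite Z \<longrightarrow> 0 \<le> delta L alpha R Z"
      and "X \<subseteq> U \<and> finite X" "Z \<subseteq> X"
    then show "0 \<le> delta L alpha R Z" using finite_subset[of Z X] by blast
  qed
  then show ?thesis
    unfolding models_Sforall_def by (simp add: in_K_induced_iff cong: conj_cong)
qed

lemma in_K_delta_nonneg:
  assumes "in_K L ar alpha U R" "Z \<subseteq> U"
  shows "0 \<le> delta L alpha R Z"
  using assms delta_induced[of Z Z L alpha R] unfolding in_K_def by auto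

lemma delta_submodular:
  assumes "finite X" "finite Y" "\<forall>E\<in>L. 0 \<le> alpha E"
  shows "delta L alpha R (X \<union> Y) + delta L alpha R (X \<inter> Y) \<le> delta L alpha R X + delta L alpha R Y"
proof -
  let ?N = "\<lambda>Z E. real (card {s \<in> R E. s \<subseteq> Z})"
  have edges: "?N X E + ?N Y E \<le> ?N (X \<union> Y) E + ?N (X \<inter> Y) E" for E
  proof -
    let ?P = "{s \<in> R E. s \<subseteq> X}" and ?Q = "{s \<in> R E. s \<subseteq> Y}"
    have fin: "finite ?P" "finite ?Q"
      using finite_edges_within assms(1,2) by auto
    have "card ?P + card ?Q = card (?P \<union> ?Q) + card (?P \<inter> ?Q)"
      using card_Un_Int[OF fin] .
    moreover have "?P \<inter> ?Q = {s \<in> R E. s \<subseteq> X \<inter> Y}" by auto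
    moreover have "card (?P \<union> ?Q) \<le> card {s \<in> R E. s \<subseteq> X \<union> Y}"
      by (rule card_mono) (use finite_edges_within assms(1,2) in auto)
    ultimately have "card ?P + card ?Q \<le> card {s \<in> R E. s \<subseteq> X \<union> Y} + card {s \<in> R E. s \<subseteq> X \<inter> Y}"
      by simp
    then show ?thesis by linarith
  qed
  have "(\<Sum>E\<in>L. alpha E * ?N X E) + (\<Sum>E\<in>L. alpha E * ?N Y E)
     \<le> (\<Sum>E\<in>L. alpha E * ?N (X \<union> Y) E) + (\<Sum>E\<in>L. alpha E * ?N (X \<inter> Y) E)"
    unfolding sum.distrib[symmetric] distrib_left[symmetric]
    using assms(3) edges by (intro sum_mono mult_left_mono) auto
  moreover have "real (card (X \<union> Y)) + real (card (X \<inter> Y)) = real (card X) + real (card Y)"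
    using card_Un_Int[OF assms(1,2)] by linarith
  ultimately show ?thesis
    unfolding delta_def by linarith
qed

lemma strong_delta_Int_le:
  assumes "strong L alpha R A U" "Z \<subseteq> U" "finite Z" "\<forall>E\<in>L. 0 \<le> alpha E"
  shows "delta L alpha R (Z \<inter> A) \<le> delta L alpha R Z"
proof -
  have A: "finite A" "A \<subseteq> U" using assms(1) unfolding strong_def by auto
  have "delta L alpha R (Z \<union> A) + delta L alpha R (Z \<inter> A) \<le> delta L alpha R Z + delta L alpha R A"
    using delta_submodular[OF assms(3) A(1) assms(4)] .
  moreover have "delta L alpha R A \<le> delta L alpha R (Z \<union> A)"
    using assms(1-3) A unfolding strong_def by auto
  ultimately show ?thesis by linarith
qed

lemma min_pair_subset:
  assumes mp: "min_pair L alpha R A B" and "A \<subseteq> M"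
    and cut: "\<And>C. A \<subseteq> C \<Longrightarrow> C \<subseteq> B \<Longrightarrow> delta L alpha R (C \<inter> M) \<le> delta L alpha R C"
  shows "B \<subseteq> M"
proof (rule ccontr)
  assume "\<not> B \<subseteq> M"
  have AB: "A \<subseteq> B" "finite B" and not_strong: "\<not> strong L alpha R A B"
    using mp unfolding min_pair_def by auto
  have "A \<subset> B \<inter> M \<or> A = B \<inter> M" "B \<inter> M \<subset> B"
    using AB(1) \<open>A \<subseteq> M\<close> \<open>\<not> B \<subseteq> M\<close> by auto
  then have strong_cut: "strong L alpha R A (B \<inter> M)"
    using mp \<open>A \<subseteq> M\<close> AB(1) unfolding min_pair_def by blast
  obtain C where C: "A \<subseteq> C" "C \<subseteq> B" "delta L alpha R C < delta L alpha R A"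
    using not_strong AB finite_subset[OF AB] unfolding strong_def by (auto simp: not_le)
  have "A \<subseteq> C \<inter> M" "C \<inter> M \<subseteq> B \<inter> M" "finite (C \<inter> M)"
    using C \<open>A \<subseteq> M\<close> finite_subset[OF C(2) AB(2)] by auto
  with strong_cut have "delta L alpha R A \<le> delta L alpha R (C \<inter> M)"
    unfolding strong_def by blast
  with cut[OF C(1,2)] C(3) show False by linarith
qed

locale free_join =
  fixes L :: "'l set" and ar :: "'l \<Rightarrow> nat" and alpha :: "'l \<Rightarrow> real"
    and UM UA UB :: "'a set" and RM RB :: "'l \<Rightarrow> 'a set set"
  assumes struct_M: "is_struct L ar UM RM"
    and struct_B: "is_struct L ar UB RB"
    and finite_B: "finite UB"
    and B_Int_M: "UB \<inter> UM = UA"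
    and agree_on_A: "induced RM UA = induced RB UA"
    and alpha_nonneg: "\<forall>E\<in>L. 0 \<le> alpha E"
begin

lemma edge_subset_M: "s \<in> RM E \<Longrightarrow> s \<subseteq> UM"
  using struct_M unfolding is_struct_def by auto

lemma edge_subset_B: "s \<in> RB E \<Longrightarrow> s \<subseteq> UB"
  using struct_B unfolding is_struct_def by auto

lemma edge_on_A:
  assumes "s \<subseteq> UA"
  shows "s \<in> RM E \<longleftrightarrow> s \<in> RB E"
proof -
  have "s \<in> induced RM UA E \<longleftrightarrow> s \<in> induced RB UA E" by (simp add: agree_on_A)
  then show ?thesis using assms unfolding induced_def by simp
qed

lemma edge_B_in_M:
  assumes "s \<in> RB E" "s \<subseteq> UM"
  shows "s \<in> RM E"
proof -
  have "s \<subseteq> UA" using edge_subset_B[OF assms(1)] assms(2) B_Int_M by blast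
  then show ?thesis using assms(1) by (simp add: edge_on_A)
qed

lemma induced_join_M: "induced (join_rel RM RB) UM = induced RM UM"
proof
  fix E
  show "induced (join_rel RM RB) UM E = induced RM UM E"
    unfolding induced_def join_rel_def by (auto intro: edge_B_in_M)
qed

lemma delta_join_on_M: "Z \<subseteq> UM \<Longrightarrow> delta L alpha (join_rel RM RB) Z = delta L alpha RM Z"
  using delta_induced[of Z UM L alpha "join_rel RM RB"] delta_induced[of Z UM L alpha RM]
  by (simp add: induced_join_M)

lemma delta_B_on_A: "Z \<subseteq> UA \<Longrightarrow> delta L alpha RB Z = delta L alpha RM Z"
  using delta_induced[of Z UA L alpha RB] delta_induced[of Z UA L alpha RM]
  by (simp add: agree_on_A)

lemma delta_join:
  assumes "finite Y" "Y \<subseteq> UM \<union> UB"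
  shows "delta L alpha (join_rel RM RB) Y + delta L alpha RM (Y \<inter> UA)
       = delta L alpha RM (Y \<inter> UM) + delta L alpha RB (Y \<inter> UB)"
proof -
  let ?N = "\<lambda>R Z E. real (card {s \<in> R E. s \<subseteq> Z})"
  have edges: "?N (join_rel RM RB) Y E + ?N RM (Y \<inter> UA) E = ?N RM (Y \<inter> UM) E + ?N RB (Y \<inter> UB) E"
    for E
  proof -
    let ?P = "{s \<in> RM E. s \<subseteq> Y \<inter> UM}" and ?Q = "{s \<in> RB E. s \<subseteq> Y \<inter> UB}"
    have fin: "finite ?P" "finite ?Q"
      using finite_edges_within assms(1) by auto
    have "?P \<union> ?Q = {s \<in> join_rel RM RB E. s \<subseteq> Y}"
      unfolding join_rel_def by (auto dest: edge_subset_M edge_subset_B)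
    moreover have "?P \<inter> ?Q = {s \<in> RM E. s \<subseteq> Y \<inter> UA}"
    proof (intro equalityI subsetI)
      fix s assume "s \<in> ?P \<inter> ?Q"
      then show "s \<in> {s \<in> RM E. s \<subseteq> Y \<inter> UA}" using B_Int_M by auto
    next
      fix s assume s: "s \<in> {s \<in> RM E. s \<subseteq> Y \<inter> UA}"
      then have "s \<in> RB E" using edge_on_A[of s E] by simp
      with s show "s \<in> ?P \<inter> ?Q" using B_Int_M by auto
    qed
    moreover have "card ?P + card ?Q = card (?P \<union> ?Q) + card (?P \<inter> ?Q)"
      using card_Un_Int[OF fin] .
    ultimately show ?thesis by simp
  qed
  have "(\<Sum>E\<in>L. alpha E * ?N (join_rel RM RB) Y E) + (\<Sum>E\<in>L. alpha E * ?N RM (Y \<inter> UA) E)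
     = (\<Sum>E\<in>L. alpha E * ?N RM (Y \<inter> UM) E) + (\<Sum>E\<in>L. alpha E * ?N RB (Y \<inter> UB) E)"
    unfolding sum.distrib[symmetric] distrib_left[symmetric] edges ..
  moreover have "real (card Y) + real (card (Y \<inter> UA)) = real (card (Y \<inter> UM)) + real (card (Y \<inter> UB))"
  proof -
    have "Y = (Y \<inter> UM) \<union> (Y \<inter> UB)" "(Y \<inter> UM) \<inter> (Y \<inter> UB) = Y \<inter> UA"
      using assms(2) B_Int_M by auto
    then have "card Y + card (Y \<inter> UA) = card (Y \<inter> UM) + card (Y \<inter> UB)"
      using card_Un_Int[of "Y \<inter> UM" "Y \<inter> UB"] assms(1) by simp
    then show ?thesis by linarith
  qed
  ultimately show ?thesis
    unfolding delta_def by linarith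
qed

lemma delta_join_ge_M:
  assumes "strong L alpha RB UA UB" "finite Y" "Y \<subseteq> UM \<union> UB"
  shows "delta L alpha RM (Y \<inter> UM) \<le> delta L alpha (join_rel RM RB) Y"
proof -
  have "Y \<inter> UB \<inter> UA = Y \<inter> UA" using B_Int_M by auto
  then have "delta L alpha RM (Y \<inter> UA) \<le> delta L alpha RB (Y \<inter> UB)"
    using strong_delta_Int_le[OF assms(1), of "Y \<inter> UB"] assms(2) alpha_nonneg
    by (simp add: delta_B_on_A)
  then show ?thesis using delta_join[OF assms(2,3)] by linarith
qed

lemma delta_join_ge_B:
  assumes "strong L alpha RM UA UM" "finite Y" "Y \<subseteq> UM \<union> UB"
  shows "delta L alpha RB (Y \<inter> UB) \<le> delta L alpha (join_rel RM RB) Y"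
proof -
  have "Y \<inter> UM \<inter> UA = Y \<inter> UA" using B_Int_M by auto
  then have "delta L alpha RM (Y \<inter> UA) \<le> delta L alpha RM (Y \<inter> UM)"
    using strong_delta_Int_le[OF assms(1), of "Y \<inter> UM"] assms(2) alpha_nonneg by simp
  then show ?thesis using delta_join[OF assms(2,3)] by linarith
qed

lemma models_Sforall_join:
  assumes "models_Sforall L ar alpha UM RM" "in_K L ar alpha UB RB"
    and "strong L alpha RB UA UB \<or> strong L alpha RM UA UM"
  shows "models_Sforall L ar alpha (UM \<union> UB) (join_rel RM RB)"
  unfolding models_Sforall_iff_delta_nonneg
proof (intro conjI allI impI)
  show "is_struct L ar (UM \<union> UB) (join_rel RM RB)"
    using struct_M struct_B by (rule is_struct_join_rel)
next
  fix Y assume Y: "Y \<subseteq> UM \<union> UB \<and> finite Y"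
  have M: "0 \<le> delta L alpha RM (Y \<inter> UM)"
    using assms(1) Y unfolding models_Sforall_iff_delta_nonneg by auto
  have B: "0 \<le> delta L alpha RB (Y \<inter> UB)"
    by (rule in_K_delta_nonneg[OF assms(2)]) blast
  from assms(3) show "0 \<le> delta L alpha (join_rel RM RB) Y"
  proof
    assume "strong L alpha RB UA UB"
    with M Y show ?thesis using delta_join_ge_M[of Y] by linarith
  next
    assume "strong L alpha RM UA UM"
    with B Y show ?thesis using delta_join_ge_B[of Y] by linarith
  qed
qed

lemma preserves_closures_join:
  assumes "strong L alpha RB UA UB"
  shows "preserves_closures L alpha UM RM (UM \<union> UB) (join_rel RM RB)"
  unfolding preserves_closures_def
proof (intro allI impI)
  fix X assume "X \<subseteq> UM \<and> closed_in L alpha UM RM X"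
  then have X: "X \<subseteq> UM"
    and closed: "\<And>A B. A \<subseteq> X \<Longrightarrow> finite A \<Longrightarrow> B \<subseteq> UM \<Longrightarrow> min_pair L alpha RM A B \<Longrightarrow> B \<subseteq> X"
    unfolding closed_in_def by blast+
  show "closed_in L alpha (UM \<union> UB) (join_rel RM RB) X"
    unfolding closed_in_def
  proof (intro conjI allI impI)
    show "X \<subseteq> UM \<union> UB" using X by blast
    fix A B assume AB: "A \<subseteq> X \<and> finite A \<and> B \<subseteq> UM \<union> UB \<and> min_pair L alpha (join_rel RM RB) A B"
    have "B \<subseteq> UM"
    proof (rule min_pair_subset[where A = A])
      fix C assume "C \<subseteq> B"
      moreover have "finite B" using AB unfolding min_pair_def by blast
      ultimately have "finite C" "C \<subseteq> UM \<union> UB" using AB finite_subset by blast+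
      then show "delta L alpha (join_rel RM RB) (C \<inter> UM) \<le> delta L alpha (join_rel RM RB) C"
        using delta_join_ge_M[OF assms] delta_join_on_M[of "C \<inter> UM"] by simp
    qed (use AB X in auto)
    moreover have "min_pair L alpha (join_rel RM RB) A B" using AB by blast
    ultimately have "min_pair L alpha RM A B"
      using min_pair_induced[of B UM L alpha RM A] min_pair_induced[of B UM L alpha "join_rel RM RB" A]
      by (simp add: induced_join_M)
    then show "B \<subseteq> X" using closed AB \<open>B \<subseteq> UM\<close> by blast
  qed
qed

lemma strong_join_Un:
  assumes G: "strong L alpha RM G UM" "UA \<subseteq> G"
  shows "strong L alpha (join_rel RM RB) (G \<union> UB) (UM \<union> UB)"
  unfolding strong_def
proof (intro conjI allI impI)
  have "G \<subseteq> UM" "finite G" using G unfolding strong_def by auto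
  then show GB: "G \<union> UB \<subseteq> UM \<union> UB" "finite (G \<union> UB)" using finite_B by auto
  fix C assume C: "G \<union> UB \<subseteq> C \<and> C \<subseteq> UM \<union> UB \<and> finite C"
  have "delta L alpha RM G \<le> delta L alpha RM (C \<inter> UM)"
    using G C \<open>G \<subseteq> UM\<close> unfolding strong_def by auto
  moreover have "delta L alpha (join_rel RM RB) (G \<union> UB) + delta L alpha RM UA
      = delta L alpha RM G + delta L alpha RB UB"
  proof -
    have "(G \<union> UB) \<inter> UM = G" "(G \<union> UB) \<inter> UB = UB" "(G \<union> UB) \<inter> UA = UA"
      using G(2) \<open>G \<subseteq> UM\<close> B_Int_M by auto
    then show ?thesis using delta_join[OF GB(2,1)] by simp
  qed
  moreover have "delta L alpha (join_rel RM RB) C + delta L alpha RM UA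
      = delta L alpha RM (C \<inter> UM) + delta L alpha RB UB"
  proof -
    have "C \<inter> UB = UB" "C \<inter> UA = UA" using C B_Int_M by auto
    then show ?thesis using delta_join[of C] C by simp
  qed
  ultimately show "delta L alpha (join_rel RM RB) (G \<union> UB) \<le> delta L alpha (join_rel RM RB) C"
    by linarith
qed

lemma finite_closures_join:
  assumes "finite_closures L alpha UM RM"
  shows "finite_closures L alpha (UM \<union> UB) (join_rel RM RB)"
  unfolding finite_closures_def
proof (intro allI impI)
  fix F assume F: "F \<subseteq> UM \<union> UB \<and> finite F"
  have "F \<inter> UM \<union> UA \<subseteq> UM \<and> finite (F \<inter> UM \<union> UA)"
    using F finite_subset[of UA UB] finite_B B_Int_M by auto
  from assms[unfolded finite_closures_def, rule_format, OF this]
  obtain G where G: "F \<inter> UM \<union> UA \<subseteq> G" "G \<subseteq> UM" "finite G" "strong L alpha RM G UM"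
    by blast
  have "strong L alpha (join_rel RM RB) (G \<union> UB) (UM \<union> UB)"
    using G(1) by (intro strong_join_Un[OF G(4)]) blast
  moreover have "F \<subseteq> G \<union> UB" "G \<union> UB \<subseteq> UM \<union> UB" "finite (G \<union> UB)"
    using F G finite_B by auto
  ultimately show "\<exists>G'. F \<subseteq> G' \<and> G' \<subseteq> UM \<union> UB \<and> finite G' \<and>
      strong L alpha (join_rel RM RB) G' (UM \<union> UB)" by blast
qed

end

theorem lemma5p11:
  fixes L :: "'l set" and ar :: "'l \<Rightarrow> nat" and alpha :: "'l \<Rightarrow> real"
    and UM UA UB :: "'a set" and RM RA RB :: "'l \<Rightarrow> 'a set set"
  assumes "finite L"
    and "\<forall>E\<in>L. 2 \<le> ar E"
    and "\<forall>E\<in>L. 0 < alpha E \<and> alpha E \<le> 1"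
    and "\<not> (\<forall>E\<in>L. ar E = 2 \<and> alpha E = 1)"
    and "models_Sforall L ar alpha UM RM"
    and "in_K L ar alpha UA RA"
    and "in_K L ar alpha UB RB"
    and "UB \<inter> UM = UA"
    and "is_substr UA RA UM RM"
    and "is_substr UA RA UB RB"
  shows "((strong L alpha RB UA UB \<or> strong L alpha RM UA UM)
            \<longrightarrow> models_Sforall L ar alpha (UM \<union> UB) (join_rel RM RB))
       \<and> (strong L alpha RB UA UB
            \<longrightarrow> preserves_closures L alpha UM RM (UM \<union> UB) (join_rel RM RB))
       \<and> (strong L alpha RM UA UM
            \<longrightarrow> strong L alpha (join_rel RM RB) UB (UM \<union> UB))
       \<and> ((strong L alpha RB UA UB \<or> strong L alpha RM UA UM) \<and> finite_closures L alpha UM RM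
            \<longrightarrow> finite_closures L alpha (UM \<union> UB) (join_rel RM RB))"
proof -
  interpret free_join L ar alpha UM UA UB RM RB
  proof
    show "is_struct L ar UM RM" using assms(5) unfolding models_Sforall_def by blast
    show "is_struct L ar UB RB" "finite UB" using assms(7) unfolding in_K_def by auto
    show "induced RM UA = induced RB UA" using assms(9,10) unfolding is_substr_def by simp
  qed (use assms(3,8) in auto)
  have "UA \<union> UB = UB" using assms(8) by blast
  then have "strong L alpha RM UA UM \<Longrightarrow> strong L alpha (join_rel RM RB) UB (UM \<union> UB)"
    using strong_join_Un[of UA] by simp
  then show ?thesis
    using models_Sforall_join[OF assms(5,7)] preserves_closures_join finite_closures_join
    by simp
qed

end
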